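(* Let $X$ be a compact Hausdorff space. Then the locale $MO(C(X))$ is isomorphic to (the locale of opens of) $X$.
   Context: For a unital C*-algebra $A$, $\mathcal{C}(A)$ is the set of commutative unital C*-subalgebras ordered by inclusion, $\Sigma(C)$ the Gelfand spectrum, $r_{D,C}:\Sigma(D)\to\Sigma(C)$ restriction for $C\subseteq D$. $MO(A)$ is the locale presented by the poset of pairs $(C,u)$, $C\in\mathcal{C}(A)$, $u$ open in $\Sigma(C)$, with $(D,v)\le(C,u)$ iff $C\subseteq D$ and $v\subseteq r_{D,C}^{-1}(u)$, and covering $(C,u)\lhd\{(D_i,v_i)\}_{i\in I}$ iff $C\subseteq D_i$ for all $i$ and for every $D\in\mathcal{C}(A)$ with $C\subseteq D$ there is $i$ with $D\subseteq D_i$ and $r_{D_i,C}^{-1}(u)\subseteq\bigcup\{r_{D_i,D_j}^{-1}(v_j): D_j\subseteq D_i\}$ (frame = down-closed subsets closed under the covering). *)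

theory Defs
  imports "HOL-Analysis.Analysis"
begin

text \<open>Elements of C(X) are continuous complex functions on the topological space X,
  represented as total functions that vanish outside topspace X (so that the pointwise
  algebra operations below stay within the carrier).\<close>

definition CX :: "'a topology \<Rightarrow> ('a \<Rightarrow> complex) set" where
  "CX X = {f. continuous_map X euclidean f \<and> (\<forall>x. x \<notin> topspace X \<longrightarrow> f x = 0)}"

definition one_CX :: "'a topology \<Rightarrow> 'a \<Rightarrow> complex" where
  "one_CX X = (\<lambda>x. if x \<in> topspace X then 1 else 0)"

text \<open>Commutative unital C*-subalgebras of C(X): subsets containing the unit of C(X),
  closed under the *-algebra operations and closed in the supremum norm.
  (Commutativity is automatic since C(X) is commutative.)\<close>

definition csubalg :: "'a topology \<Rightarrow> ('a \<Rightarrow> complex) set \<Rightarrow> bool" where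
  "csubalg X C \<longleftrightarrow>
     C \<subseteq> CX X \<and>
     one_CX X \<in> C \<and>
     (\<forall>f\<in>C. \<forall>g\<in>C. (\<lambda>x. f x + g x) \<in> C) \<and>
     (\<forall>f\<in>C. \<forall>g\<in>C. (\<lambda>x. f x * g x) \<in> C) \<and>
     (\<forall>c. \<forall>f\<in>C. (\<lambda>x. c * f x) \<in> C) \<and>
     (\<forall>f\<in>C. (\<lambda>x. cnj (f x)) \<in> C) \<and>
     (\<forall>f\<in>CX X. (\<forall>e>0. \<exists>g\<in>C. \<forall>x\<in>topspace X. norm (f x - g x) < e) \<longrightarrow> f \<in> C)"

definition CC :: "'a topology \<Rightarrow> ('a \<Rightarrow> complex) set set" where
  "CC X = {C. csubalg X C}"

text \<open>Characters of C: linear, multiplicative, unital functionals on C; represented as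
  functions that are undefined outside C (as in product_topology).\<close>

definition Spec :: "'a topology \<Rightarrow> ('a \<Rightarrow> complex) set \<Rightarrow> (('a \<Rightarrow> complex) \<Rightarrow> complex) set" where
  "Spec X C = {\<phi>. \<phi> \<in> extensional C \<and>
      (\<forall>f\<in>C. \<forall>g\<in>C. \<phi> (\<lambda>x. f x + g x) = \<phi> f + \<phi> g) \<and>
      (\<forall>c. \<forall>f\<in>C. \<phi> (\<lambda>x. c * f x) = c * \<phi> f) \<and>
      (\<forall>f\<in>C. \<forall>g\<in>C. \<phi> (\<lambda>x. f x * g x) = \<phi> f * \<phi> g) \<and>
      \<phi> (one_CX X) = 1}"

text \<open>Gelfand topology = weak-* topology = topology of pointwise convergence on C.\<close>

definition gelfand_top :: "'a topology \<Rightarrow> ('a \<Rightarrow> complex) set \<Rightarrow> (('a \<Rightarrow> complex) \<Rightarrow> complex) topology" where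
  "gelfand_top X C = subtopology (product_topology (\<lambda>_. euclidean) C) (Spec X C)"

definition rpre :: "'a topology \<Rightarrow> ('a \<Rightarrow> complex) set \<Rightarrow> ('a \<Rightarrow> complex) set
     \<Rightarrow> (('a \<Rightarrow> complex) \<Rightarrow> complex) set \<Rightarrow> (('a \<Rightarrow> complex) \<Rightarrow> complex) set" where
  "rpre X D C u = {\<phi> \<in> Spec X D. restrict \<phi> C \<in> u}"

type_synonym 'a mopair = "('a \<Rightarrow> complex) set \<times> (('a \<Rightarrow> complex) \<Rightarrow> complex) set"

definition MOpairs :: "'a topology \<Rightarrow> 'a mopair set" where
  "MOpairs X = {(C, u). C \<in> CC X \<and> openin (gelfand_top X C) u}"

definition MOle :: "'a topology \<Rightarrow> 'a mopair \<Rightarrow> 'a mopair \<Rightarrow> bool" where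
  "MOle X p q \<longleftrightarrow> (case p of (D, v) \<Rightarrow> case q of (C, u) \<Rightarrow> C \<subseteq> D \<and> v \<subseteq> rpre X D C u)"

text \<open>Covering relation (C,u) \<lhd> F, F a family of pairs (given as a set).  Besides the
  clause from the paper, a generator with empty open u is covered by the empty family.\<close>

definition MOcov :: "'a topology \<Rightarrow> 'a mopair \<Rightarrow> 'a mopair set \<Rightarrow> bool" where
  "MOcov X p F \<longleftrightarrow> (case p of (C, u) \<Rightarrow>
     ((\<forall>(Di, vi)\<in>F. C \<subseteq> Di) \<and>
      (\<forall>D\<in>CC X. C \<subseteq> D \<longrightarrow>
         (\<exists>(Di, vi)\<in>F. D \<subseteq> Di \<and>
            rpre X Di C u \<subseteq> \<Union>{rpre X Di Dj vj | Dj vj. (Dj, vj) \<in> F \<and> Dj \<subseteq> Di})))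
     \<or> (u = {} \<and> F = {}))"

definition MOframe :: "'a topology \<Rightarrow> 'a mopair set set" where
  "MOframe X = {I. I \<subseteq> MOpairs X \<and>
      (\<forall>q\<in>I. \<forall>p\<in>MOpairs X. MOle X p q \<longrightarrow> p \<in> I) \<and>
      (\<forall>p\<in>MOpairs X. \<forall>F. F \<subseteq> I \<longrightarrow> MOcov X p F \<longrightarrow> p \<in> I)}"

text \<open>Isomorphism of locales = isomorphism of frames = order isomorphism of the underlying
  (complete) lattices, here ordered by inclusion.\<close>

definition frame_iso :: "'b set set \<Rightarrow> 'c set set \<Rightarrow> bool" where
  "frame_iso L M \<longleftrightarrow> (\<exists>h. bij_betw h L M \<and> (\<forall>I\<in>L. \<forall>J\<in>L. I \<subseteq> J \<longleftrightarrow> h I \<subseteq> h J))"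

end

theory Submission
  imports Defs
begin

(* The proof has two independent halves, glued by transitivity of frame isomorphism.

   (1) For ANY topological space X, the frame MO(C(X)) is isomorphic to the frame of opens of
       the Gelfand spectrum of the top algebra C(X).  The reason is that C(X) is the largest
       element of the poset of subalgebras: a down-closed, cover-closed ideal I is determined
       by the open set of characters of C(X) that it carries (the union of the pulled-back opens
       of its members), because in a covering condition one may always test with D = C(X).

   (2) For X compact Hausdorff, the evaluation map x \<mapsto> (f \<mapsto> f x) is a homeomorphism from X
       onto the Gelfand spectrum of C(X): every character is a point evaluation (otherwise a
       finite sum of squares |f - \<phi>(f)|\<^sup>2, found by compactness, would be an invertible element
       of its kernel), points are separated by Urysohn functions, and a continuous bijection
       from a compact space to a Hausdorff space is a homeomorphism.  Homeomorphic spaces have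
       isomorphic frames of opens. *)

lemma frame_iso_by_inverses:
  assumes f_into: "f ` L \<subseteq> M" and g_into: "g ` M \<subseteq> L"
    and gf: "\<And>I. I \<in> L \<Longrightarrow> g (f I) = I" and fg: "\<And>J. J \<in> M \<Longrightarrow> f (g J) = J"
    and f_mono: "\<And>I J. I \<subseteq> J \<Longrightarrow> f I \<subseteq> f J" and g_mono: "\<And>I J. I \<subseteq> J \<Longrightarrow> g I \<subseteq> g J"
  shows "frame_iso L M"
  unfolding frame_iso_def
proof (intro exI[of _ f] conjI ballI)
  show "bij_betw f L M"
    by (rule bij_betw_byWitness[where f'=g]) (use assms in auto)
  show "I \<subseteq> J \<longleftrightarrow> f I \<subseteq> f J" if "I \<in> L" "J \<in> L" for I J
  proof
    assume "f I \<subseteq> f J"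
    then have "g (f I) \<subseteq> g (f J)" by (rule g_mono)
    then show "I \<subseteq> J" using gf that by simp
  qed (rule f_mono)
qed

lemma frame_iso_trans:
  assumes "frame_iso L M" and "frame_iso M N"
  shows "frame_iso L N"
proof -
  obtain h where h: "bij_betw h L M" and h_ord: "\<forall>I\<in>L. \<forall>J\<in>L. I \<subseteq> J \<longleftrightarrow> h I \<subseteq> h J"
    using assms(1) unfolding frame_iso_def by blast
  obtain k where k: "bij_betw k M N" and k_ord: "\<forall>I\<in>M. \<forall>J\<in>M. I \<subseteq> J \<longleftrightarrow> k I \<subseteq> k J"
    using assms(2) unfolding frame_iso_def by blast
  have "bij_betw (k \<circ> h) L N" using h k by (rule bij_betw_trans)
  moreover have "I \<subseteq> J \<longleftrightarrow> (k \<circ> h) I \<subseteq> (k \<circ> h) J" if "I \<in> L" "J \<in> L" for I J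
  proof -
    have "h I \<in> M" "h J \<in> M" using bij_betw_apply[OF h] that by blast+
    then show ?thesis using h_ord k_ord that by simp
  qed
  ultimately show ?thesis unfolding frame_iso_def by blast
qed

lemma homeomorphic_map_frame_iso:
  assumes hom: "homeomorphic_map X Y e"
  shows "frame_iso {U. openin X U} {V. openin Y V}"
proof -
  have cont: "continuous_map X Y e" and img: "e ` topspace X = topspace Y"
    and inj: "inj_on e (topspace X)"
    using hom unfolding homeomorphic_eq_everything_map by blast+
  define pre where "pre V = {x \<in> topspace X. e x \<in> V}" for V
  show ?thesis
  proof (rule frame_iso_by_inverses[where f="image e" and g=pre])
    show "image e ` {U. openin X U} \<subseteq> {V. openin Y V}"
    proof
      fix V assume "V \<in> image e ` {U. openin X U}"
      then obtain U where U: "openin X U" and V: "V = e ` U" by blast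
      have "openin Y (e ` U)" using homeomorphic_map_openness[OF hom openin_subset[OF U]] U by simp
      then show "V \<in> {V. openin Y V}" using V by simp
    qed
    show "pre ` {V. openin Y V} \<subseteq> {U. openin X U}"
      using openin_continuous_map_preimage[OF cont] unfolding pre_def by auto
    show "pre (e ` U) = U" if "U \<in> {U. openin X U}" for U
    proof -
      have "U \<subseteq> topspace X" using that openin_subset by blast
      then show ?thesis unfolding pre_def by (auto dest: inj_onD[OF inj])
    qed
    show "e ` pre V = V" if "V \<in> {V. openin Y V}" for V
    proof -
      have "V \<subseteq> e ` topspace X" using that openin_subset img by blast
      then show ?thesis unfolding pre_def by auto
    qed
    show "e ` I \<subseteq> e ` J" if "I \<subseteq> J" for I J using that by blast
    show "pre I \<subseteq> pre J" if "I \<subseteq> J" for I J using that unfolding pre_def by blast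
  qed
qed

text \<open>Pointwise algebra preserves continuity into a normed algebra (the library states these
  closure rules only for real-valued maps).\<close>

lemma continuous_map_mult_normed:
  fixes f g :: "'a \<Rightarrow> 'b::real_normed_algebra"
  shows "continuous_map X euclidean f \<Longrightarrow> continuous_map X euclidean g
    \<Longrightarrow> continuous_map X euclidean (\<lambda>x. f x * g x)"
  by (simp add: continuous_map_atin tendsto_mult)

lemma continuous_map_cnj:
  fixes f :: "'a \<Rightarrow> complex"
  shows "continuous_map X euclidean f \<Longrightarrow> continuous_map X euclidean (\<lambda>x. cnj (f x))"
  by (simp add: continuous_map_atin tendsto_cnj)

lemma continuous_map_inverse_normed:
  fixes f :: "'a \<Rightarrow> 'b::real_normed_div_algebra"
  shows "continuous_map X euclidean f \<Longrightarrow> (\<And>x. x \<in> topspace X \<Longrightarrow> f x \<noteq> 0)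
    \<Longrightarrow> continuous_map X euclidean (\<lambda>x. inverse (f x))"
  by (simp add: continuous_map_atin tendsto_inverse)

lemma CX_cutoff:
  "continuous_map X euclidean f \<Longrightarrow> (\<lambda>x. if x \<in> topspace X then f x else 0) \<in> CX X"
  unfolding CX_def by (auto intro: continuous_map_eq)

lemma CX_one: "one_CX X \<in> CX X"
  using CX_cutoff[of X "\<lambda>_. 1"] by (simp add: one_CX_def)

lemma CX_add: "f \<in> CX X \<Longrightarrow> g \<in> CX X \<Longrightarrow> (\<lambda>x. f x + g x) \<in> CX X"
  by (auto simp: CX_def intro: continuous_map_add)

lemma CX_mult: "f \<in> CX X \<Longrightarrow> g \<in> CX X \<Longrightarrow> (\<lambda>x. f x * g x) \<in> CX X"
  by (auto simp: CX_def intro: continuous_map_mult_normed)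

lemma CX_smult: "f \<in> CX X \<Longrightarrow> (\<lambda>x. c * f x) \<in> CX X"
  by (auto simp: CX_def intro: continuous_map_mult_normed)

lemma CX_cnj: "f \<in> CX X \<Longrightarrow> (\<lambda>x. cnj (f x)) \<in> CX X"
  by (auto simp: CX_def intro: continuous_map_cnj)

lemma CX_sum:
  "finite S \<Longrightarrow> (\<And>i. i \<in> S \<Longrightarrow> k i \<in> CX X) \<Longrightarrow> (\<lambda>y. \<Sum>i\<in>S. k i y) \<in> CX X"
  by (auto simp: CX_def intro: continuous_map_sum)

lemma CX_in_CC: "CX X \<in> CC X"
  by (auto simp: CC_def csubalg_def CX_add CX_mult CX_smult CX_cnj CX_one)

lemma CC_sub_CX: "C \<in> CC X \<Longrightarrow> C \<subseteq> CX X"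
  by (simp add: CC_def csubalg_def)

lemma topspace_gelfand: "topspace (gelfand_top X C) = Spec X C"
  by (auto simp: gelfand_top_def Spec_def PiE_def)

lemma restrict_Spec:
  assumes "\<phi> \<in> Spec X D" "C \<subseteq> D" "C \<in> CC X"
  shows "restrict \<phi> C \<in> Spec X C"
  using assms unfolding CC_def Spec_def csubalg_def by (auto simp: subset_iff)

lemma restrict_continuous:
  assumes "C \<subseteq> D" "C \<in> CC X"
  shows "continuous_map (gelfand_top X D) (gelfand_top X C) (\<lambda>\<phi>. restrict \<phi> C)"
proof -
  let ?T = "subtopology (product_topology (\<lambda>_. euclidean) D) (Spec X D)"
  have "continuous_map ?T euclidean (\<lambda>\<phi>. restrict \<phi> C k)" if "k \<in> C" for k
  proof -
    have "continuous_map ?T euclidean (\<lambda>\<phi>. \<phi> k)"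
      using that assms(1)
      by (intro continuous_map_from_subtopology continuous_map_product_projection) auto
    then show ?thesis using that by simp
  qed
  then have "continuous_map ?T (product_topology (\<lambda>_. euclidean) C) (\<lambda>\<phi>. restrict \<phi> C)"
    unfolding continuous_map_componentwise by auto
  moreover have "(\<lambda>\<phi>. restrict \<phi> C) ` topspace ?T \<subseteq> Spec X C"
    using restrict_Spec[OF _ assms] by auto
  ultimately show ?thesis unfolding gelfand_top_def continuous_map_in_subtopology by blast
qed

lemma rpre_open:
  assumes "openin (gelfand_top X C) u" "C \<subseteq> D" "C \<in> CC X"
  shows "openin (gelfand_top X D) (rpre X D C u)"
  using openin_continuous_map_preimage[OF restrict_continuous[OF assms(2,3)] assms(1)]
  by (simp add: rpre_def topspace_gelfand)

lemma rpre_id: "w \<subseteq> Spec X A \<Longrightarrow> rpre X A A w = w"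
  by (auto simp: rpre_def Spec_def extensional_restrict)

lemma rpre_trans:
  assumes "C \<subseteq> D" "v \<subseteq> rpre X D C u"
  shows "rpre X A D v \<subseteq> rpre X A C u"
proof
  fix t assume "t \<in> rpre X A D v"
  then have "restrict (restrict t D) C \<in> u" using assms(2) by (auto simp: rpre_def)
  moreover have "restrict (restrict t D) C = restrict t C" using assms(1) by (simp add: Int_absorb1)
  ultimately show "t \<in> rpre X A C u" using \<open>t \<in> rpre X A D v\<close> by (simp add: rpre_def)
qed

section \<open>MO(C(X)) is the frame of opens of the spectrum of C(X)\<close>

definition mo_points :: "'a topology \<Rightarrow> 'a mopair set \<Rightarrow> (('a \<Rightarrow> complex) \<Rightarrow> complex) set" where
  "mo_points X I = \<Union>{rpre X (CX X) C u | C u. (C, u) \<in> I}"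

definition mo_ideal :: "'a topology \<Rightarrow> (('a \<Rightarrow> complex) \<Rightarrow> complex) set \<Rightarrow> 'a mopair set" where
  "mo_ideal X U = {(C, u) \<in> MOpairs X. rpre X (CX X) C u \<subseteq> U}"

lemma MOpairs_rpre_open:
  "(C, u) \<in> MOpairs X \<Longrightarrow> openin (gelfand_top X (CX X)) (rpre X (CX X) C u)"
  by (auto simp: MOpairs_def intro!: rpre_open CC_sub_CX)

lemma MOcov_at_top:
  assumes cov: "MOcov X (C, u) F" and C: "C \<in> CC X" and F: "F \<subseteq> MOpairs X"
  shows "rpre X (CX X) C u \<subseteq> \<Union>{rpre X (CX X) D v | D v. (D, v) \<in> F}"
proof (cases "u = {}")
  case True then show ?thesis by (simp add: rpre_def)
next
  case False
  then have "\<forall>D\<in>CC X. C \<subseteq> D \<longrightarrow> (\<exists>(Di, vi)\<in>F. D \<subseteq> Di \<and>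
      rpre X Di C u \<subseteq> \<Union>{rpre X Di Dj vj | Dj vj. (Dj, vj) \<in> F \<and> Dj \<subseteq> Di})"
    using cov unfolding MOcov_def by simp
  then have "\<exists>(Di, vi)\<in>F. CX X \<subseteq> Di \<and>
      rpre X Di C u \<subseteq> \<Union>{rpre X Di Dj vj | Dj vj. (Dj, vj) \<in> F \<and> Dj \<subseteq> Di}"
    using CX_in_CC CC_sub_CX[OF C] by blast
  then obtain Di vi where Fi: "(Di, vi) \<in> F" and top: "CX X \<subseteq> Di"
    and cv: "rpre X Di C u \<subseteq> \<Union>{rpre X Di Dj vj | Dj vj. (Dj, vj) \<in> F \<and> Dj \<subseteq> Di}"
    by blast
  have "Di = CX X" using Fi F top CC_sub_CX by (force simp: MOpairs_def)
  then show ?thesis using cv by blast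
qed

text \<open>Conversely, any cover of a pulled-back open by opens of the spectrum of C(X) yields a
  covering family of generators at the top algebra (the empty open makes the family nonempty).\<close>

lemma MOcov_from_top:
  assumes C: "C \<in> CC X" and W: "\<And>w. w \<in> W \<Longrightarrow> w \<subseteq> Spec X (CX X)"
    and cv: "rpre X (CX X) C u \<subseteq> \<Union>W"
  shows "MOcov X (C, u) ((\<lambda>w. (CX X, w)) ` insert {} W)"
proof -
  let ?F = "(\<lambda>w. (CX X, w)) ` insert {} W"
  have "rpre X (CX X) C u \<subseteq> \<Union>{rpre X (CX X) Dj vj | Dj vj. (Dj, vj) \<in> ?F \<and> Dj \<subseteq> CX X}"
  proof
    fix t assume "t \<in> rpre X (CX X) C u"
    then obtain w where "w \<in> W" "t \<in> w" using cv by blast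
    then show "t \<in> \<Union>{rpre X (CX X) Dj vj | Dj vj. (Dj, vj) \<in> ?F \<and> Dj \<subseteq> CX X}"
      using rpre_id[OF W] by blast
  qed
  moreover have "(CX X, {}) \<in> ?F" by blast
  ultimately have "\<forall>D\<in>CC X. C \<subseteq> D \<longrightarrow> (\<exists>(Di, vi)\<in>?F. D \<subseteq> Di \<and>
      rpre X Di C u \<subseteq> \<Union>{rpre X Di Dj vj | Dj vj. (Dj, vj) \<in> ?F \<and> Dj \<subseteq> Di})"
    using CC_sub_CX by fastforce
  moreover have "\<forall>(Di, vi)\<in>?F. C \<subseteq> Di" using CC_sub_CX[OF C] by blast
  ultimately show ?thesis unfolding MOcov_def by simp
qed

lemma mo_points_open:
  "I \<in> MOframe X \<Longrightarrow> openin (gelfand_top X (CX X)) (mo_points X I)"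
  unfolding MOframe_def mo_points_def using MOpairs_rpre_open by (auto intro!: openin_Union)

lemma mo_ideal_in_MOframe:
  assumes U: "openin (gelfand_top X (CX X)) U"
  shows "mo_ideal X U \<in> MOframe X"
proof -
  have down: "p \<in> mo_ideal X U" if q: "q \<in> mo_ideal X U" and p: "p \<in> MOpairs X"
    and le: "MOle X p q" for p q
  proof -
    obtain C u where qq: "q = (C, u)" by (cases q)
    obtain D v where pp: "p = (D, v)" by (cases p)
    have "rpre X (CX X) D v \<subseteq> rpre X (CX X) C u"
      using le qq pp by (intro rpre_trans) (simp_all add: MOle_def)
    also have "\<dots> \<subseteq> U" using q qq by (simp add: mo_ideal_def)
    finally show ?thesis using p pp by (simp add: mo_ideal_def)
  qed
  have cover: "p \<in> mo_ideal X U"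
    if p: "p \<in> MOpairs X" and F: "F \<subseteq> mo_ideal X U" and cov: "MOcov X p F" for p F
  proof -
    obtain C u where pp: "p = (C, u)" by (cases p)
    have "C \<in> CC X" using p pp by (simp add: MOpairs_def)
    moreover have "F \<subseteq> MOpairs X" using F unfolding mo_ideal_def by blast
    ultimately have "rpre X (CX X) C u \<subseteq> \<Union>{rpre X (CX X) D v | D v. (D, v) \<in> F}"
      using MOcov_at_top cov pp by blast
    also have "\<dots> \<subseteq> U" using F unfolding mo_ideal_def by blast
    finally show ?thesis using p pp by (simp add: mo_ideal_def)
  qed
  have "mo_ideal X U \<subseteq> MOpairs X" unfolding mo_ideal_def by blast
  then show ?thesis unfolding MOframe_def using down cover by blast
qed

lemma mo_points_mo_ideal:
  assumes U: "openin (gelfand_top X (CX X)) U"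
  shows "mo_points X (mo_ideal X U) = U"
proof
  show "mo_points X (mo_ideal X U) \<subseteq> U" by (auto simp: mo_points_def mo_ideal_def)
  have US: "U \<subseteq> Spec X (CX X)" using openin_subset[OF U] by (simp add: topspace_gelfand)
  have "(CX X, U) \<in> mo_ideal X U"
    using CX_in_CC U rpre_id[OF US] by (simp add: mo_ideal_def MOpairs_def)
  then show "U \<subseteq> mo_points X (mo_ideal X U)"
    using rpre_id[OF US] unfolding mo_points_def by blast
qed

lemma mo_ideal_mo_points:
  assumes I: "I \<in> MOframe X"
  shows "mo_ideal X (mo_points X I) = I"
proof
  have IM: "I \<subseteq> MOpairs X"
    and down: "\<And>q p. q \<in> I \<Longrightarrow> p \<in> MOpairs X \<Longrightarrow> MOle X p q \<Longrightarrow> p \<in> I"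
    and covc: "\<And>p F. p \<in> MOpairs X \<Longrightarrow> F \<subseteq> I \<Longrightarrow> MOcov X p F \<Longrightarrow> p \<in> I"
    using I unfolding MOframe_def by blast+
  then show "I \<subseteq> mo_ideal X (mo_points X I)" by (auto simp: mo_ideal_def mo_points_def)
  define W where "W = {rpre X (CX X) D v | D v. (D, v) \<in> I}"
  have top_in_I: "(CX X, w) \<in> I" if w: "w \<in> insert {} W" for w
  proof (cases "w = {}")
    case True
    have "(CX X, {}) \<in> MOpairs X" using CX_in_CC by (simp add: MOpairs_def)
    then show ?thesis using True covc[of _ "{}"] by (simp add: MOcov_def)
  next
    case False
    then obtain D v where Dv: "(D, v) \<in> I" "w = rpre X (CX X) D v" using w W_def by blast
    then have "(CX X, w) \<in> MOpairs X"
      using IM MOpairs_rpre_open CX_in_CC by (force simp: MOpairs_def)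
    moreover have "MOle X (CX X, w) (D, v)"
      using Dv IM CC_sub_CX by (force simp: MOle_def MOpairs_def)
    ultimately show ?thesis using down Dv(1) by blast
  qed
  show "mo_ideal X (mo_points X I) \<subseteq> I"
  proof
    fix p assume p: "p \<in> mo_ideal X (mo_points X I)"
    obtain C u where pp: "p = (C, u)" by (cases p)
    have pM: "p \<in> MOpairs X" and C: "C \<in> CC X"
      and cv: "rpre X (CX X) C u \<subseteq> \<Union>W"
      using p pp by (auto simp: mo_ideal_def mo_points_def W_def MOpairs_def)
    have "MOcov X p ((\<lambda>w. (CX X, w)) ` insert {} W)"
      using MOcov_from_top[OF C _ cv] pp by (auto simp: W_def rpre_def)
    then show "p \<in> I" using covc[OF pM] top_in_I by blast
  qed
qed

theorem MOframe_iso_spectrum: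
  "frame_iso (MOframe X) {U. openin (gelfand_top X (CX X)) U}"
proof (rule frame_iso_by_inverses[where f="mo_points X" and g="mo_ideal X"])
  show "mo_points X ` MOframe X \<subseteq> {U. openin (gelfand_top X (CX X)) U}"
    using mo_points_open by blast
  show "mo_ideal X ` {U. openin (gelfand_top X (CX X)) U} \<subseteq> MOframe X"
    using mo_ideal_in_MOframe by blast
  show "mo_points X I \<subseteq> mo_points X J" if "I \<subseteq> J" for I J
    using that unfolding mo_points_def by blast
  show "mo_ideal X U \<subseteq> mo_ideal X V" if "U \<subseteq> V" for U V
    using that unfolding mo_ideal_def by blast
qed (simp_all add: mo_points_mo_ideal mo_ideal_mo_points)

section \<open>Characters of C(X) are point evaluations\<close>

lemma Spec_add: "\<phi> \<in> Spec X C \<Longrightarrow> f \<in> C \<Longrightarrow> g \<in> C \<Longrightarrow> \<phi> (\<lambda>x. f x + g x) = \<phi> f + \<phi> g"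
  by (simp add: Spec_def)

lemma Spec_smult: "\<phi> \<in> Spec X C \<Longrightarrow> f \<in> C \<Longrightarrow> \<phi> (\<lambda>x. c * f x) = c * \<phi> f"
  by (simp add: Spec_def)

lemma Spec_mult: "\<phi> \<in> Spec X C \<Longrightarrow> f \<in> C \<Longrightarrow> g \<in> C \<Longrightarrow> \<phi> (\<lambda>x. f x * g x) = \<phi> f * \<phi> g"
  by (simp add: Spec_def)

lemma Spec_one: "\<phi> \<in> Spec X C \<Longrightarrow> \<phi> (one_CX X) = 1"
  by (simp add: Spec_def)

lemma Spec_sum:
  assumes phi: "\<phi> \<in> Spec X (CX X)" and S: "finite S" and k: "\<And>i. i \<in> S \<Longrightarrow> k i \<in> CX X"
  shows "\<phi> (\<lambda>y. \<Sum>i\<in>S. k i y) = (\<Sum>i\<in>S. \<phi> (k i))"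
  using S k
proof (induction S rule: finite_induct)
  case empty
  have "\<phi> (\<lambda>y. 0 * one_CX X y) = 0 * \<phi> (one_CX X)" using Spec_smult[OF phi CX_one] .
  then show ?case by simp
next
  case (insert a S)
  have "\<phi> (\<lambda>y. k a y + (\<Sum>i\<in>S. k i y)) = \<phi> (k a) + \<phi> (\<lambda>y. \<Sum>i\<in>S. k i y)"
    using insert.prems CX_sum[OF insert.hyps(1), of k] by (intro Spec_add[OF phi]) auto
  then show ?case using insert by simp
qed

lemma Spec_nonvanishing:
  assumes phi: "\<phi> \<in> Spec X (CX X)" and H: "H \<in> CX X"
    and nz: "\<And>y. y \<in> topspace X \<Longrightarrow> H y \<noteq> 0"
  shows "\<phi> H \<noteq> 0"
proof
  assume zero: "\<phi> H = 0"
  define Hi where "Hi y = (if y \<in> topspace X then inverse (H y) else 0)" for y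
  have "continuous_map X euclidean H" using H by (simp add: CX_def)
  then have Hi: "Hi \<in> CX X"
    unfolding Hi_def using nz by (intro CX_cutoff continuous_map_inverse_normed)
  have "H y = 0" if "y \<notin> topspace X" for y using H that by (simp add: CX_def)
  then have "(\<lambda>y. H y * Hi y) = one_CX X"
    using nz by (auto simp: Hi_def one_CX_def)
  then have "\<phi> (one_CX X) = \<phi> H * \<phi> Hi" using Spec_mult[OF phi H Hi] by simp
  then show False using Spec_one[OF phi] zero by simp
qed

text \<open>If a character differs from evaluation at x on some f, then it annihilates a
  nonnegative function that is positive at x, namely \<open>|f - \<phi>(f)|\<^sup>2\<close>.\<close>

lemma Spec_kernel_bump:
  assumes phi: "\<phi> \<in> Spec X (CX X)" and f: "f \<in> CX X" and x: "x \<in> topspace X"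
    and ne: "\<phi> f \<noteq> f x"
  shows "\<exists>h\<in>CX X. \<phi> h = 0 \<and> (\<forall>y. 0 \<le> Re (h y)) \<and> 0 < Re (h x)"
proof -
  define g where "g y = f y + (- \<phi> f) * one_CX X y" for y
  have g: "g \<in> CX X"
    unfolding g_def using f by (intro CX_add CX_smult CX_one)
  have "\<phi> g = \<phi> f + \<phi> (\<lambda>y. (- \<phi> f) * one_CX X y)"
    unfolding g_def by (rule Spec_add[OF phi f CX_smult[OF CX_one]])
  also have "\<dots> = \<phi> f + (- \<phi> f) * \<phi> (one_CX X)" by (simp only: Spec_smult[OF phi CX_one])
  finally have g_ker: "\<phi> g = 0" using Spec_one[OF phi] by simp
  have gx: "g x \<noteq> 0" using ne x by (simp add: g_def one_CX_def)
  define h where "h y = g y * cnj (g y)" for y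
  have "h \<in> CX X" unfolding h_def using g by (intro CX_mult CX_cnj)
  moreover have "\<phi> h = 0" unfolding h_def using g g_ker by (simp add: Spec_mult[OF phi] CX_cnj)
  moreover have "Re (h y) = (cmod (g y))\<^sup>2" for y
    by (simp add: h_def complex_mult_cnj cmod_power2)
  ultimately show ?thesis using gx by (intro bexI[of _ h]) auto
qed

lemma compact_space_positive_finite_sum:
  fixes h :: "'a \<Rightarrow> 'a \<Rightarrow> complex"
  assumes comp: "compact_space X"
    and cont: "\<And>x. x \<in> topspace X \<Longrightarrow> continuous_map X euclidean (h x)"
    and nonneg: "\<And>x y. x \<in> topspace X \<Longrightarrow> 0 \<le> Re (h x y)"
    and pos: "\<And>x. x \<in> topspace X \<Longrightarrow> 0 < Re (h x x)"
  obtains S where "S \<subseteq> topspace X" "finite S" "\<And>y. y \<in> topspace X \<Longrightarrow> 0 < (\<Sum>i\<in>S. Re (h i y))"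
proof -
  define W where "W x = {y \<in> topspace X. h x y \<in> {z. 0 < Re z}}" for x
  have W_open: "openin X (W x)" if "x \<in> topspace X" for x
    unfolding W_def using cont[OF that] open_halfspace_Re_gt[of 0]
    by (intro openin_continuous_map_preimage) auto
  have "topspace X \<subseteq> \<Union>(W ` topspace X)" using pos by (auto simp: W_def)
  then obtain FF where FF: "finite FF" "FF \<subseteq> W ` topspace X" "topspace X \<subseteq> \<Union>FF"
    using comp W_open unfolding compact_space_alt by (metis (no_types, lifting) imageE)
  then obtain S where S: "S \<subseteq> topspace X" "finite S" "FF = W ` S"
    using finite_subset_image by metis
  have "0 < (\<Sum>i\<in>S. Re (h i y))" if y: "y \<in> topspace X" for y
  proof -
    obtain i where i: "i \<in> S" "y \<in> W i" using FF(3) S(3) y by auto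
    show ?thesis using S nonneg i by (intro sum_pos2[where i=i]) (auto simp: W_def)
  qed
  then show ?thesis using that S(1,2) by blast
qed

text \<open>Every character of C(X), X compact, is evaluation at a point: otherwise the bumps of
  Spec_kernel_bump, finitely many by compactness, sum to an invertible element of the kernel.\<close>

lemma Spec_point_evaluation:
  assumes comp: "compact_space X" and phi: "\<phi> \<in> Spec X (CX X)"
  shows "\<exists>x\<in>topspace X. \<forall>f\<in>CX X. \<phi> f = f x"
proof (rule ccontr)
  assume "\<not> ?thesis"
  then have "\<forall>x\<in>topspace X. \<exists>h\<in>CX X. \<phi> h = 0 \<and> (\<forall>y. 0 \<le> Re (h y)) \<and> 0 < Re (h x)"
    using Spec_kernel_bump[OF phi] by metis
  then obtain h where h: "\<And>x. x \<in> topspace X \<Longrightarrow>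
      h x \<in> CX X \<and> \<phi> (h x) = 0 \<and> (\<forall>y. 0 \<le> Re (h x y)) \<and> 0 < Re (h x x)"
    by metis
  obtain S where S: "S \<subseteq> topspace X" "finite S"
    and Spos: "\<And>y. y \<in> topspace X \<Longrightarrow> 0 < (\<Sum>i\<in>S. Re (h i y))"
    by (rule compact_space_positive_finite_sum[OF comp, of h]) (use h in \<open>auto simp: CX_def\<close>)
  define H where "H y = (\<Sum>i\<in>S. h i y)" for y
  have H: "H \<in> CX X" unfolding H_def using S h by (intro CX_sum) auto
  have "\<phi> H = (\<Sum>i\<in>S. \<phi> (h i))" unfolding H_def using S h by (intro Spec_sum[OF phi]) auto
  also have "\<dots> = 0" using S h by (intro sum.neutral) auto
  finally have "\<phi> H = 0" .
  moreover have "H y \<noteq> 0" if "y \<in> topspace X" for y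
  proof -
    have "Re (H y) \<noteq> 0" using Spos[OF that] by (simp add: H_def Re_sum)
    then show ?thesis by auto
  qed
  ultimately show False using Spec_nonvanishing[OF phi H] by blast
qed

section \<open>The spectrum of C(X) is homeomorphic to X\<close>

text \<open>Urysohn's lemma: C(X) separates the points of a compact Hausdorff space.\<close>

lemma CX_separates_points:
  assumes comp: "compact_space X" and haus: "Hausdorff_space X"
    and x: "x \<in> topspace X" and y: "y \<in> topspace X" and xy: "x \<noteq> y"
  shows "\<exists>f\<in>CX X. f x \<noteq> f y"
proof -
  have "normal_space X" using compact_Hausdorff_or_regular_imp_normal_space comp haus by blast
  moreover have "closedin X {x}" "closedin X {y}"
    using closedin_Hausdorff_singleton[OF haus] x y by blast+
  moreover have "disjnt {x} {y}" using xy by simp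
  ultimately obtain f where f: "continuous_map X euclideanreal f"
    and f0: "f ` {x} \<subseteq> {0::real}" and f1: "f ` {y} \<subseteq> {1}"
    by (rule Urysohn_lemma_alt)
  define g where "g z = (if z \<in> topspace X then complex_of_real (f z) else 0)" for z
  have "continuous_map X euclidean (\<lambda>z. complex_of_real (f z))"
    using f by (simp add: continuous_map_atin tendsto_of_real)
  then have "g \<in> CX X" unfolding g_def by (rule CX_cutoff)
  moreover have "g x \<noteq> g y" using f0 f1 x y by (simp add: g_def)
  ultimately show ?thesis by blast
qed

definition gelfand_eval :: "'a topology \<Rightarrow> 'a \<Rightarrow> ('a \<Rightarrow> complex) \<Rightarrow> complex" where
  "gelfand_eval X x = restrict (\<lambda>f. f x) (CX X)"

lemma gelfand_eval_Spec: "x \<in> topspace X \<Longrightarrow> gelfand_eval X x \<in> Spec X (CX X)"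
  using CX_one[of X] by (simp add: gelfand_eval_def Spec_def CX_add CX_smult CX_mult one_CX_def)

lemma gelfand_eval_continuous: "continuous_map X (gelfand_top X (CX X)) (gelfand_eval X)"
proof -
  have "continuous_map X (product_topology (\<lambda>_. euclidean) (CX X)) (gelfand_eval X)"
    unfolding continuous_map_componentwise gelfand_eval_def by (auto simp: CX_def)
  then show ?thesis unfolding gelfand_top_def continuous_map_in_subtopology
    using gelfand_eval_Spec by auto
qed

theorem gelfand_eval_homeomorphic:
  assumes comp: "compact_space X" and haus: "Hausdorff_space X"
  shows "homeomorphic_map X (gelfand_top X (CX X)) (gelfand_eval X)"
proof (rule continuous_imp_homeomorphic_map[OF gelfand_eval_continuous comp])
  show "Hausdorff_space (gelfand_top X (CX X))" unfolding gelfand_top_def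
    by (intro Hausdorff_space_subtopology) (simp add: Hausdorff_space_product_topology)
  show "gelfand_eval X ` topspace X = topspace (gelfand_top X (CX X))"
  proof
    show "gelfand_eval X ` topspace X \<subseteq> topspace (gelfand_top X (CX X))"
      using gelfand_eval_Spec by (auto simp: topspace_gelfand)
    show "topspace (gelfand_top X (CX X)) \<subseteq> gelfand_eval X ` topspace X"
    proof
      fix \<phi> assume "\<phi> \<in> topspace (gelfand_top X (CX X))"
      then have phi: "\<phi> \<in> Spec X (CX X)" by (simp add: topspace_gelfand)
      then obtain x where x: "x \<in> topspace X" "\<forall>f\<in>CX X. \<phi> f = f x"
        using Spec_point_evaluation[OF comp] by blast
      have "\<phi> = gelfand_eval X x"
        by (rule extensionalityI[of _ "CX X"]) (use phi x in \<open>auto simp: Spec_def gelfand_eval_def\<close>)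
      then show "\<phi> \<in> gelfand_eval X ` topspace X" using x by blast
    qed
  qed
  show "inj_on (gelfand_eval X) (topspace X)"
  proof
    fix x y assume xy: "x \<in> topspace X" "y \<in> topspace X" "gelfand_eval X x = gelfand_eval X y"
    show "x = y"
    proof (rule ccontr)
      assume "x \<noteq> y"
      then obtain f where "f \<in> CX X" "f x \<noteq> f y" using CX_separates_points[OF comp haus xy(1,2)] by blast
      then show False using fun_cong[OF xy(3), of f] by (simp add: gelfand_eval_def)
    qed
  qed
qed

corollary spectrum_frame_iso:
  assumes "compact_space X" and "Hausdorff_space X"
  shows "frame_iso {U. openin (gelfand_top X (CX X)) U} {U. openin X U}"
proof -
  obtain g where "homeomorphic_maps X (gelfand_top X (CX X)) (gelfand_eval X) g"
    using gelfand_eval_homeomorphic[OF assms] homeomorphic_map_maps by blast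
  then have "homeomorphic_map (gelfand_top X (CX X)) X g"
    using homeomorphic_maps_map by blast
  then show ?thesis by (rule homeomorphic_map_frame_iso)
qed

theorem corollary5p2:
  fixes X :: "'a topology"
  assumes "compact_space X" and "Hausdorff_space X"
  shows "frame_iso (MOframe X) {U. openin X U}"
  using frame_iso_trans[OF MOframe_iso_spectrum spectrum_frame_iso[OF assms]] .

end
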